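(* Let $p$ be an odd prime. Then \[\sum_{i=1}^{(p-1)/2}\left(S_{2i}^*-S_{2i-1}^*\right)\equiv -1\pmod p.\]
   Context: For $u\in\mathbb{F}_p$ and $0\le\ell<p$, $S_\ell^*(u)=\{S\subseteq\mathbb{F}_p^* \mid \#S=\ell,\ \sum_{s\in S}s=u\}$, where $\mathbb{F}_p^*=\mathbb{F}_p\setminus\{0\}$ and sums are in $\mathbb{F}_p$. The cardinality $\#S_\ell^*(u)$ does not depend on $u\in\mathbb{F}_p^*$; this common integer value is denoted $S_\ell^*$. *)

theory Defs
  imports "HOL-Number_Theory.Number_Theory"
begin

text \<open>F_p is modelled by the residues {0..<p} (naturals), F_p^* by {1..<p};
  sums in F_p are natural-number sums taken mod p.\<close>

definition Sset :: "nat \<Rightarrow> nat \<Rightarrow> nat \<Rightarrow> nat set set" where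
  "Sset p l u = {S. S \<subseteq> {1..<p} \<and> card S = l \<and> (\<Sum>S) mod p = u}"

text \<open>The common value of card (Sset p l u) for u in F_p^*; we take u = 1.\<close>
definition Sstar :: "nat \<Rightarrow> nat \<Rightarrow> nat" where
  "Sstar p l = card (Sset p l 1)"

end

(*
  Translating an l-subset of F_p by t adds l t to its sum, so for 0 < l < p every residue is
  the sum of equally many l-subsets of F_p, namely binomial(p, l) / p of them. Sorting these
  subsets by whether they contain 0 gives S*_l + S*_(l-1) = binomial(p, l) / p, hence
  p S*_l = binomial(p - 1, l) - (-1)^l by induction on l. The alternating binomial sum then
  yields the exact identity sum_(k=1..p-1) (-1)^k S*_k = -1, which is the theorem's sum.
*)
theory Submission
  imports Defs
begin

definition Sset_full :: "nat \<Rightarrow> nat \<Rightarrow> nat \<Rightarrow> nat set set" where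
  "Sset_full p l u = {S. S \<subseteq> {0..<p} \<and> card S = l \<and> (\<Sum>S) mod p = u}"

lemma finite_Sset_full: "finite (Sset_full p l u)"
  by (rule finite_subset[of _ "Pow {0..<p}"]) (auto simp: Sset_full_def)

lemma finite_Sset: "finite (Sset p l u)"
  by (rule finite_subset[of _ "Pow {1..<p}"]) (auto simp: Sset_def)

lemma solve_linear_mod_coprime:
  fixes l p u v :: nat
  assumes "coprime l p" and "v < p"
  obtains t where "(u + l * t) mod p = v"
proof -
  obtain x where x: "[l * x = 1] (mod p)"
    using cong_solve_coprime_nat[OF assms(1)] by auto
  define t where "t = x * (v + p - u mod p)"
  have "[u + l * t = u mod p + 1 * (v + p - u mod p)] (mod p)"
    unfolding t_def mult.assoc[symmetric]
    by (intro cong_add cong_mult x cong_refl) (simp add: cong_def)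
  also have "u mod p + 1 * (v + p - u mod p) = v + p"
    using mod_less_divisor[of p u] assms(2) by linarith
  finally show ?thesis
    using that assms(2) by (simp add: cong_def)
qed

lemma card_Sset_full_le:
  assumes "coprime l p" and "v < p"
  shows "card (Sset_full p l u) \<le> card (Sset_full p l v)"
proof -
  obtain t where t: "(u + l * t) mod p = v"
    using solve_linear_mod_coprime[OF assms] .
  have "0 < p"
    using assms(2) by simp
  define f where "f y = (y + t) mod p" for y
  have inj_f: "inj_on f {0..<p}"
    by (rule inj_onI) (auto simp: f_def cong_def[symmetric] cong_add_rcancel_nat cong_less_modulus_unique_nat)
  have maps_to: "(`) f ` Sset_full p l u \<subseteq> Sset_full p l v"
  proof
    fix T assume "T \<in> (`) f ` Sset_full p l u"
    then obtain S where S: "S \<subseteq> {0..<p}" "card S = l" "(\<Sum>S) mod p = u" and T: "T = f ` S"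
      by (auto simp: Sset_full_def)
    have inj_S: "inj_on f S"
      using inj_f S(1) inj_on_subset by blast
    have "\<Sum>T = (\<Sum>y\<in>S. f y)"
      using T inj_S by (simp add: sum.reindex)
    then have "(\<Sum>T) mod p = (\<Sum>y\<in>S. y + t) mod p"
      by (simp add: f_def mod_sum_eq)
    also have "\<dots> = ((\<Sum>S) mod p + l * t) mod p"
      using S(2) by (simp add: sum.distrib mod_add_left_eq)
    finally have "(\<Sum>T) mod p = v"
      using S(3) t by simp
    moreover have "card T = l"
      using card_image[OF inj_S] S(2) T by simp
    moreover have "T \<subseteq> {0..<p}"
      using T \<open>0 < p\<close> by (auto simp: f_def)
    ultimately show "T \<in> Sset_full p l v"
      by (simp add: Sset_full_def)
  qed
  have "inj_on ((`) f) (Sset_full p l u)"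
    by (rule inj_on_subset[OF inj_on_image_Pow[OF inj_f]]) (auto simp: Sset_full_def)
  then show ?thesis
    using maps_to finite_Sset_full by (rule card_inj_on_le)
qed

lemma card_Sset_full_eq:
  assumes "coprime l p" and "u < p" and "v < p"
  shows "card (Sset_full p l u) = card (Sset_full p l v)"
  using assms by (intro antisym card_Sset_full_le)

lemma card_Sset_full:
  assumes "coprime l p" and "u < p"
  shows "p * card (Sset_full p l u) = p choose l"
proof -
  have "p choose l = card {S. S \<subseteq> {0..<p} \<and> card S = l}"
    using n_subsets[of "{0..<p}" l] by simp
  also have "{S. S \<subseteq> {0..<p} \<and> card S = l} = (\<Union>v\<in>{0..<p}. Sset_full p l v)"
    using assms(2) by (auto simp: Sset_full_def)
  also have "card \<dots> = (\<Sum>v\<in>{0..<p}. card (Sset_full p l v))"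
    by (rule card_UN_disjoint) (auto simp: finite_Sset_full Sset_full_def)
  also have "\<dots> = (\<Sum>v\<in>{0..<p}. card (Sset_full p l u))"
    using card_Sset_full_eq[OF assms] by (intro sum.cong) auto
  finally show ?thesis
    by simp
qed

lemma Sset_full_split:
  assumes "0 < l" and "0 < p"
  shows "Sset_full p l u = Sset p l u \<union> insert 0 ` Sset p (l - 1) u"
proof (intro equalityI subsetI)
  fix S assume "S \<in> Sset_full p l u"
  then have S: "S \<subseteq> {0..<p}" "card S = l" "(\<Sum>S) mod p = u"
    by (auto simp: Sset_full_def)
  show "S \<in> Sset p l u \<union> insert 0 ` Sset p (l - 1) u"
  proof (cases "0 \<in> S")
    case False
    then have "S \<subseteq> {1..<p}"
      using S(1) by (auto simp: subset_iff Suc_le_eq intro: gr0I)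
    then show ?thesis
      using S by (simp add: Sset_def)
  next
    case True
    have "finite S"
      using S(1) finite_subset by blast
    then have "S - {0} \<in> Sset p (l - 1) u"
      using S True by (auto simp: Sset_def sum.remove)
    moreover have "S = insert 0 (S - {0})"
      using True by auto
    ultimately show ?thesis
      by blast
  qed
next
  fix S assume "S \<in> Sset p l u \<union> insert 0 ` Sset p (l - 1) u"
  then show "S \<in> Sset_full p l u"
  proof
    assume "S \<in> Sset p l u"
    then show ?thesis
      by (auto simp: Sset_def Sset_full_def)
  next
    assume "S \<in> insert 0 ` Sset p (l - 1) u"
    then obtain T where T: "T \<subseteq> {1..<p}" "card T = l - 1" "(\<Sum>T) mod p = u"
      and S: "S = insert 0 T"
      by (auto simp: Sset_def)
    moreover have "finite T" and "0 \<notin> T"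
      using T(1) finite_subset by auto
    ultimately show ?thesis
      using assms by (auto simp: Sset_full_def)
  qed
qed

lemma card_Sset_full_split:
  assumes "0 < l" and "0 < p"
  shows "card (Sset_full p l u) = card (Sset p l u) + card (Sset p (l - 1) u)"
proof -
  have zero_notin: "0 \<notin> T" if "T \<in> Sset p k u" for T k
    using that by (auto simp: Sset_def)
  have "inj_on (insert 0) (Sset p (l - 1) u)"
    by (rule inj_onI) (metis Diff_insert_absorb zero_notin)
  moreover have "Sset p l u \<inter> insert 0 ` Sset p (l - 1) u = {}"
    using zero_notin by blast
  ultimately show ?thesis
    unfolding Sset_full_split[OF assms]
    by (simp add: card_Un_disjoint finite_Sset card_image)
qed

lemma Sstar_0:
  assumes "1 < p"
  shows "Sstar p 0 = 0"
proof -
  have "Sset p 0 1 = {}"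
    using assms by (auto simp: Sset_def dest: finite_subset)
  then show ?thesis
    by (simp add: Sstar_def)
qed

lemma Sstar_closed_form:
  assumes "prime p" and "l < p"
  shows "int p * int (Sstar p l) = int ((p - 1) choose l) - (-1) ^ l"
  using assms(2)
proof (induction l)
  case 0
  then show ?case
    using Sstar_0 prime_gt_1_nat[OF assms(1)] by simp
next
  case (Suc l)
  have "coprime (Suc l) p"
    using assms(1) Suc.prems
    by (metis coprime_commute dvd_imp_le not_le prime_imp_coprime_nat zero_less_Suc)
  then have "p * card (Sset_full p (Suc l) 1) = p choose Suc l"
    using prime_gt_1_nat[OF assms(1)] by (intro card_Sset_full) auto
  then have "p * (Sstar p (Suc l) + Sstar p l) = p choose Suc l"
    using card_Sset_full_split[of "Suc l" p 1] Suc.prems by (simp add: Sstar_def)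
  moreover have "p choose Suc l = ((p - 1) choose l) + ((p - 1) choose Suc l)"
    using Suc.prems by (metis Suc_diff_1 binomial_Suc_Suc gr0I not_less_zero)
  ultimately show ?case
    using Suc by (simp add: algebra_simps flip: of_nat_mult of_nat_add)
qed

lemma sum_pairs_eq_alternating_sum:
  fixes f :: "nat \<Rightarrow> 'a :: comm_ring_1"
  shows "(\<Sum>i=1..m. f (2 * i) - f (2 * i - 1)) = (\<Sum>k=1..2 * m. (-1) ^ k * f k)"
proof (induction m)
  case 0
  then show ?case
    by simp
next
  case (Suc m)
  have "{1..2 * Suc m} = insert (2 * m + 2) (insert (2 * m + 1) {1..2 * m})"
    by auto
  then show ?case
    using Suc by simp
qed

lemma alternating_binomial_sum_from_1:
  assumes "0 < n"
  shows "(\<Sum>k=1..n. (-1) ^ k * of_nat (n choose k)) = (-1 :: 'a :: comm_ring_1)"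
proof -
  have "{..n} = insert 0 {1..n}"
    by auto
  then show ?thesis
    using choose_alternating_sum[OF assms, where 'a = 'a] by (simp add: eq_neg_iff_add_eq_0 add.commute)
qed

lemma alternating_sum_Sstar:
  assumes "prime p"
  shows "(\<Sum>k=1..p - 1. (-1) ^ k * int (Sstar p k)) = -1"
proof -
  have p1: "1 < p"
    using prime_gt_1_nat[OF assms] .
  have "int p * (\<Sum>k=1..p - 1. (-1) ^ k * int (Sstar p k))
      = (\<Sum>k=1..p - 1. (-1) ^ k * (int ((p - 1) choose k) - (-1) ^ k))"
    unfolding sum_distrib_left
    using Sstar_closed_form[OF assms] by (intro sum.cong) (auto simp: mult.left_commute)
  also have "\<dots> = (\<Sum>k=1..p - 1. (-1) ^ k * int ((p - 1) choose k)) - int (p - 1)"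
    by (simp add: right_diff_distrib sum_subtractf flip: power_add mult_2)
  also have "\<dots> = int p * -1"
    using p1 alternating_binomial_sum_from_1[of "p - 1", where 'a = int] by simp
  finally have "int p * (\<Sum>k=1..p - 1. (-1) ^ k * int (Sstar p k)) = int p * -1" .
  then show ?thesis
    using p1 by (subst (asm) mult_cancel_left) simp
qed

theorem proposition6:
  fixes p :: nat
  assumes "prime p" and "odd p"
  shows "[(\<Sum>i=1..(p - 1) div 2. int (Sstar p (2*i)) - int (Sstar p (2*i - 1))) = -1] (mod int p)"
proof -
  define m where "m = (p - 1) div 2"
  have "p - 1 = 2 * m"
    using assms(2) unfolding m_def by simp
  then have "(\<Sum>i=1..m. int (Sstar p (2*i)) - int (Sstar p (2*i - 1)))
      = (\<Sum>k=1..p - 1. (-1) ^ k * int (Sstar p k))"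
    using sum_pairs_eq_alternating_sum by simp
  also have "\<dots> = -1"
    using alternating_sum_Sstar[OF assms(1)] .
  finally show ?thesis
    by (simp add: m_def)
qed

end
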